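(* Let $\mathcal{J}=\{0,1,\dots,f-1\}$ and let $B,B'\in M_{2^f}(\mathbb{F})$ be matrices with all entries nonzero, rows and columns indexed by the subsets of $\mathcal{J}$, each satisfying $B_{J_1,J_3}/B_{J_1,J_4}=B_{J_2,J_3}/B_{J_2,J_4}$ (resp. the same for $B'$) for all $J_1,J_2,J_3,J_4\subseteq\mathcal{J}$. If \[\frac{B_{J,\emptyset}}{B_{J^c,\emptyset}B_{J,J^c}}=\frac{B'_{J,\emptyset}}{B'_{J^c,\emptyset}B'_{J,J^c}}\quad\text{for all }J\subseteq\mathcal{J},\] then there is an invertible diagonal matrix $Q$ with $B'=Q^{-1}BQ$. That is, up to conjugation by diagonal matrices, $B$ is uniquely determined by the quantities $B_{J,\emptyset}/(B_{J^c,\emptyset}B_{J,J^c})$, $J\subseteq\mathcal{J}$.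
   Context: $\mathbb{F}$ is a finite field; $J^c$ denotes the complement of $J$ in $\mathcal{J}$. *)

theory Defs
  imports Main
begin

text \<open>Index set \<J> = {0..<f}; matrices in M_{2^f}(F) with rows/columns indexed by
  subsets of \<J> are represented as functions nat set \<Rightarrow> nat set \<Rightarrow> 'a,
  only their values on subsets of \<J> being relevant.\<close>

definition index_sets :: "nat \<Rightarrow> nat set set" where
  "index_sets f = Pow {0..<f}"

definition compl_J :: "nat \<Rightarrow> nat set \<Rightarrow> nat set" where
  "compl_J f J = {0..<f} - J"

definition invariant_ratio :: "nat \<Rightarrow> (nat set \<Rightarrow> nat set \<Rightarrow> 'a::field) \<Rightarrow> nat set \<Rightarrow> 'a" where
  "invariant_ratio f B J = B J {} / (B (compl_J f J) {} * B J (compl_J f J))"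

end

theory Submission
  imports Defs
begin

text \<open>A matrix with nonzero entries whose cross ratios are constant has rank one,
  \<open>B x y = u x * v y\<close>, and conjugating it by an invertible diagonal matrix rescales
  \<open>u\<close> and \<open>v\<close> inversely; so such a matrix is determined up to diagonal conjugation by
  its diagonal \<open>u x * v x\<close>. The invariant ratio at \<open>J\<^sup>c\<close> is exactly \<open>1 / B J J\<close>.\<close>

definition rank_one_nonzero_on :: "'i set \<Rightarrow> ('i \<Rightarrow> 'i \<Rightarrow> 'a::field) \<Rightarrow> bool" where
  "rank_one_nonzero_on S B \<longleftrightarrow>
     (\<forall>x\<in>S. \<forall>y\<in>S. B x y \<noteq> 0) \<and>
     (\<forall>x1\<in>S. \<forall>x2\<in>S. \<forall>y1\<in>S. \<forall>y2\<in>S. B x1 y1 / B x1 y2 = B x2 y1 / B x2 y2)"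

lemma rank_one_nonzero_onD:
  assumes "rank_one_nonzero_on S B" "x \<in> S" "y \<in> S"
  shows "B x y \<noteq> 0"
  using assms by (simp add: rank_one_nonzero_on_def)

lemma rank_one_entry:
  assumes B: "rank_one_nonzero_on S B"
    and "x \<in> S" "y \<in> S" "i \<in> S" "j \<in> S"
  shows "B x y = B x j * B i y / B i j"
proof -
  have "B x y / B x j = B i y / B i j"
    using B assms(2-) unfolding rank_one_nonzero_on_def by blast
  moreover have "B x j \<noteq> 0" "B i j \<noteq> 0"
    using rank_one_nonzero_onD[OF B] assms(2-) by auto
  ultimately show ?thesis by (simp add: field_simps)
qed

lemma diagonally_similar_if_same_diagonal:
  assumes B: "rank_one_nonzero_on S B" and B': "rank_one_nonzero_on S B'"
    and diag: "\<forall>x\<in>S. B x x = B' x x"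
  shows "\<exists>Q. (\<forall>x\<in>S. Q x \<noteq> 0) \<and> (\<forall>x\<in>S. \<forall>y\<in>S. B' x y = inverse (Q x) * B x y * Q y)"
proof (cases "S = {}")
  case False
  then obtain j where j: "j \<in> S" by blast
  show ?thesis
  proof (intro exI[of _ "\<lambda>x. B x j / B' x j"] conjI ballI)
    fix x assume "x \<in> S"
    then show "B x j / B' x j \<noteq> 0"
      using rank_one_nonzero_onD[OF B] rank_one_nonzero_onD[OF B'] j by auto
  next
    fix x y assume x: "x \<in> S" and y: "y \<in> S"
    have nz: "B x j \<noteq> 0" "B' x j \<noteq> 0" "B y j \<noteq> 0" "B' y j \<noteq> 0" "B j j \<noteq> 0" "B' j j \<noteq> 0"
      using rank_one_nonzero_onD[OF B] rank_one_nonzero_onD[OF B'] x y j by auto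
    have "B y j * B j y / B j j = B' y j * B' j y / B' j j"
      using diag y rank_one_entry[OF B y y j j] rank_one_entry[OF B' y y j j] by simp
    then show "B' x y = inverse (B x j / B' x j) * B x y * (B y j / B' y j)"
      unfolding rank_one_entry[OF B x y j j] rank_one_entry[OF B' x y j j]
      using nz by (simp add: field_simps)
  qed
qed simp

lemma compl_J_in_index_sets: "compl_J f J \<in> index_sets f"
  by (simp add: compl_J_def index_sets_def)

lemma compl_J_compl_J: "J \<in> index_sets f \<Longrightarrow> compl_J f (compl_J f J) = J"
  by (auto simp: compl_J_def index_sets_def)

lemma invariant_ratio_compl_J:
  assumes B: "rank_one_nonzero_on (index_sets f) B" and K: "K \<in> index_sets f"
  shows "invariant_ratio f B (compl_J f K) = inverse (B K K)"
proof -
  define J where "J = compl_J f K"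
  have J: "J \<in> index_sets f" and E: "{} \<in> index_sets f"
    by (simp_all add: J_def compl_J_in_index_sets) (simp add: index_sets_def)
  have nz: "B J {} \<noteq> 0" "B {} {} \<noteq> 0" "B K {} \<noteq> 0" "B {} K \<noteq> 0"
    using rank_one_nonzero_onD[OF B] J K E by auto
  show ?thesis
    unfolding invariant_ratio_def J_def[symmetric] compl_J_compl_J[OF K, folded J_def]
      rank_one_entry[OF B J K E E] rank_one_entry[OF B K K E E]
    using nz by (simp add: field_simps)
qed

theorem lemma5p4:
  fixes f :: nat
    and B B' :: "nat set \<Rightarrow> nat set \<Rightarrow> 'a::{field, finite}"
  assumes nz: "\<forall>J1\<in>index_sets f. \<forall>J2\<in>index_sets f. B J1 J2 \<noteq> 0"
    and nz': "\<forall>J1\<in>index_sets f. \<forall>J2\<in>index_sets f. B' J1 J2 \<noteq> 0"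
    and rk: "\<forall>J1\<in>index_sets f. \<forall>J2\<in>index_sets f. \<forall>J3\<in>index_sets f. \<forall>J4\<in>index_sets f.
               B J1 J3 / B J1 J4 = B J2 J3 / B J2 J4"
    and rk': "\<forall>J1\<in>index_sets f. \<forall>J2\<in>index_sets f. \<forall>J3\<in>index_sets f. \<forall>J4\<in>index_sets f.
               B' J1 J3 / B' J1 J4 = B' J2 J3 / B' J2 J4"
    and inv: "\<forall>J\<in>index_sets f. invariant_ratio f B J = invariant_ratio f B' J"
  shows "\<exists>Q :: nat set \<Rightarrow> 'a.
           (\<forall>J\<in>index_sets f. Q J \<noteq> 0) \<and>
           (\<forall>J1\<in>index_sets f. \<forall>J2\<in>index_sets f.
              B' J1 J2 = inverse (Q J1) * B J1 J2 * Q J2)"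
proof -
  have B: "rank_one_nonzero_on (index_sets f) B"
    using nz rk unfolding rank_one_nonzero_on_def by blast
  have B': "rank_one_nonzero_on (index_sets f) B'"
    using nz' rk' unfolding rank_one_nonzero_on_def by blast
  have "\<forall>K\<in>index_sets f. B K K = B' K K"
  proof
    fix K assume K: "K \<in> index_sets f"
    have "inverse (B K K) = inverse (B' K K)"
      using inv compl_J_in_index_sets
      by (simp add: invariant_ratio_compl_J[OF B K, symmetric] invariant_ratio_compl_J[OF B' K, symmetric])
    then show "B K K = B' K K" by simp
  qed
  then show ?thesis
    using diagonally_similar_if_same_diagonal[OF B B'] by blast
qed

end
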